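(* Let $x\in\mathcal D$ be such that $s_n(t)=\sum_{i}|x(t^n_{i+1}\wedge t)-x(t^n_i\wedge t)|^2$ converges pointwise on $[0,\infty)$ to a function $s$ satisfying $s(t)=s^c(t)+\sum_{u\le t}(\Delta x(u))^2$ with $s^c$ continuous and nondecreasing. Then $q_n(t)=\sum_{i:\,t^n_i\le t}(x(t^n_{i+1})-x(t^n_i))^2$ converges pointwise on $[0,\infty)$ to a limit $q$, $q=s$, and $q(t)=q^c(t)+\sum_{u\le t}(\Delta x(u))^2$ with $q^c$ continuous and nondecreasing.
   Context: Let $\pi=(\pi_n)_{n\ge1}$ be a sequence of partitions $\pi_n=(t^n_0,\dots,t^n_{k_n})$ with $0=t^n_0<\dots<t^n_{k_n}<\infty$, $t^n_{k_n}\uparrow\infty$, and mesh tending to $0$ on compacts; sums over $i$ run over $0\le i<k_n$. $\mathcal D$ is the space of càdlàg functions $[0,\infty)\to\mathbb R$; $\Delta x(u)=x(u)-x(u-)$. *)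

theory Defs
  imports "HOL-Analysis.Analysis"
begin

definition partition_seq :: "(nat \<Rightarrow> nat \<Rightarrow> real) \<Rightarrow> (nat \<Rightarrow> nat) \<Rightarrow> bool" where
  "partition_seq t k \<longleftrightarrow>
     (\<forall>n. t n 0 = 0) \<and>
     (\<forall>n. \<forall>i<k n. t n i < t n (Suc i)) \<and>
     incseq (\<lambda>n. t n (k n)) \<and>
     filterlim (\<lambda>n. t n (k n)) at_top sequentially \<and>
     (\<forall>T>0. \<forall>e>0. eventually (\<lambda>n. \<forall>i<k n. min (t n (Suc i)) T - min (t n i) T < e) sequentially)"

definition cadlag :: "(real \<Rightarrow> real) \<Rightarrow> bool" where
  "cadlag x \<longleftrightarrow> (\<forall>u\<ge>0. continuous (at_right u) x) \<and> (\<forall>u>0. \<exists>l. (x \<longlongrightarrow> l) (at_left u))"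

text \<open>Jump Delta x(u) = x(u) - x(u-), with convention x(0-) = x(0).\<close>
definition jump :: "(real \<Rightarrow> real) \<Rightarrow> real \<Rightarrow> real" where
  "jump x u = (if u > 0 then x u - Lim (at_left u) x else 0)"

definition s_n :: "(nat \<Rightarrow> nat \<Rightarrow> real) \<Rightarrow> (nat \<Rightarrow> nat) \<Rightarrow> (real \<Rightarrow> real) \<Rightarrow> nat \<Rightarrow> real \<Rightarrow> real" where
  "s_n t k x n s = (\<Sum>i<k n. \<bar>x (min (t n (Suc i)) s) - x (min (t n i) s)\<bar>^2)"

definition q_n :: "(nat \<Rightarrow> nat \<Rightarrow> real) \<Rightarrow> (nat \<Rightarrow> nat) \<Rightarrow> (real \<Rightarrow> real) \<Rightarrow> nat \<Rightarrow> real \<Rightarrow> real" where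
  "q_n t k x n s = (\<Sum>i\<in>{i. i < k n \<and> t n i \<le> s}. (x (t n (Suc i)) - x (t n i))^2)"

end

theory Submission
  imports Defs
begin

text \<open>Fix \<open>r \<ge> 0\<close> and let \<open>t\<^sub>i \<le> r < t\<^sub>i\<^sub>+\<^sub>1\<close> be the partition points of \<open>\<pi>\<^sub>n\<close>
  bracketing \<open>r\<close>. The sums \<open>s\<^sub>n(r)\<close> and \<open>q\<^sub>n(r)\<close> share all terms with index below \<open>i\<close>
  and differ only in the last one, \<open>(x r - x t\<^sub>i)\<^sup>2\<close> against \<open>(x t\<^sub>i\<^sub>+\<^sub>1 - x t\<^sub>i)\<^sup>2\<close>.
  Their difference factors as \<open>(x t\<^sub>i\<^sub>+\<^sub>1 - x r) (x t\<^sub>i\<^sub>+\<^sub>1 + x r - 2 x t\<^sub>i)\<close>. As the mesh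
  shrinks, \<open>t\<^sub>i\<^sub>+\<^sub>1\<close> tends to \<open>r\<close> strictly from the right, so the first factor vanishes by right
  continuity, while the second stays bounded because \<open>x\<close> has a left limit at \<open>r\<close>.
  Hence \<open>q\<^sub>n(r)\<close> converges to \<open>s(r)\<close>, and \<open>q = s\<close>, \<open>q\<^sup>c = s\<^sup>c\<close> do the job.\<close>

lemma lift_Suc_mono_le_upto:
  fixes f :: "nat \<Rightarrow> 'a::order"
  assumes "\<forall>i<K. f i \<le> f (Suc i)" and "j \<le> l" and "l \<le> K"
  shows "f j \<le> f l"
proof -
  have "f (min j K) \<le> f (min l K)"
    by (rule lift_Suc_mono_le[of "\<lambda>n. f (min n K)"])
      (use assms in \<open>auto simp: min_def not_less_eq_eq\<close>)
  then show ?thesis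
    using assms by (simp add: min_absorb1)
qed

lemma exists_bracketing_index:
  fixes f :: "nat \<Rightarrow> 'a::linorder"
  assumes "f 0 \<le> r" and "r < f K"
  shows "\<exists>i<K. f i \<le> r \<and> r < f (Suc i)"
  using assms(2)
proof (induction K)
  case 0
  with assms(1) show ?case by simp
next
  case (Suc K)
  show ?case
  proof (cases "r < f K")
    case True
    then show ?thesis using Suc.IH by (meson less_SucI)
  next
    case False
    then show ?thesis using Suc.prems by (intro exI[of _ K]) simp
  qed
qed

context
  fixes t :: "nat \<Rightarrow> nat \<Rightarrow> real" and k :: "nat \<Rightarrow> nat" and x :: "real \<Rightarrow> real"
    and n i :: nat and r :: real
  assumes mono: "\<forall>j<k n. t n j \<le> t n (Suc j)"
    and bracket: "i < k n" "t n i \<le> r" "r < t n (Suc i)"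
begin

lemma s_n_bracket:
  "s_n t k x n r = (\<Sum>j<i. (x (t n (Suc j)) - x (t n j))^2) + (x r - x (t n i))^2"
proof -
  define d where "d j = \<bar>x (min (t n (Suc j)) r) - x (min (t n j) r)\<bar>^2" for j
  have "s_n t k x n r = sum d {..<k n}"
    unfolding s_n_def d_def ..
  also have "\<dots> = sum d {..<Suc i} + sum d {Suc i..<k n}"
    unfolding lessThan_atLeast0 using sum.atLeastLessThan_concat[of 0 "Suc i" "k n" d] bracket
    by simp
  also have "sum d {..<Suc i} = sum d {..<i} + d i"
    by simp
  also have "sum d {..<i} = (\<Sum>j<i. (x (t n (Suc j)) - x (t n j))^2)"
  proof (rule sum.cong)
    fix j assume "j \<in> {..<i}"
    then show "d j = (x (t n (Suc j)) - x (t n j))^2"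
      using lift_Suc_mono_le_upto[OF mono, of "Suc j" i] lift_Suc_mono_le_upto[OF mono, of j i]
        bracket unfolding d_def by simp
  qed simp
  also have "d i = (x r - x (t n i))^2"
    using bracket unfolding d_def by simp
  also have "sum d {Suc i..<k n} = 0"
  proof (rule sum.neutral, rule ballI)
    fix j assume "j \<in> {Suc i..<k n}"
    then show "d j = 0"
      using lift_Suc_mono_le_upto[OF mono, of "Suc i" j] mono bracket unfolding d_def by fastforce
  qed
  finally show ?thesis by simp
qed

lemma q_n_bracket:
  "q_n t k x n r = (\<Sum>j<i. (x (t n (Suc j)) - x (t n j))^2) + (x (t n (Suc i)) - x (t n i))^2"
proof -
  have "{j. j < k n \<and> t n j \<le> r} = {..<Suc i}"
  proof (intro set_eqI iffI)
    fix j assume j: "j \<in> {j. j < k n \<and> t n j \<le> r}"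
    show "j \<in> {..<Suc i}"
    proof (rule ccontr)
      assume "j \<notin> {..<Suc i}"
      then have "t n (Suc i) \<le> t n j"
        using lift_Suc_mono_le_upto[OF mono, of "Suc i" j] j by auto
      then show False using j bracket by simp
    qed
  next
    fix j assume "j \<in> {..<Suc i}"
    then show "j \<in> {j. j < k n \<and> t n j \<le> r}"
      using lift_Suc_mono_le_upto[OF mono, of j i] bracket by auto
  qed
  then show ?thesis
    unfolding q_n_def by simp
qed

lemma q_n_minus_s_n_bracket:
  "q_n t k x n r - s_n t k x n r
     = (x (t n (Suc i)) - x r) * (x (t n (Suc i)) + x r - 2 * x (t n i))"
  unfolding q_n_bracket s_n_bracket by (simp add: power2_eq_square algebra_simps)

end

lemma partition_seq_mesh_at:
  assumes "partition_seq t k" and "e > 0"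
  shows "\<forall>\<^sub>F n in sequentially. \<forall>i<k n. t n i \<le> r \<longrightarrow> t n (Suc i) < t n i + e"
proof -
  let ?T = "\<bar>r\<bar> + e"
  have "\<forall>\<^sub>F n in sequentially. \<forall>i<k n. min (t n (Suc i)) ?T - min (t n i) ?T < e"
    using assms unfolding partition_seq_def by (simp add: add_pos_nonneg)
  then show ?thesis
  proof (rule eventually_mono, intro allI impI)
    fix n i
    assume "\<forall>i<k n. min (t n (Suc i)) ?T - min (t n i) ?T < e"
      and "i < k n" and "t n i \<le> r"
    then have incr: "min (t n (Suc i)) ?T - min (t n i) ?T < e" and "t n i < ?T"
      using \<open>e > 0\<close> by (auto simp: abs_if)
    \<comment> \<open>if \<open>t\<^sub>i\<^sub>+\<^sub>1 \<ge> T\<close>, the increment truncated at \<open>T\<close> would be \<open>T - t\<^sub>i \<ge> T - r \<ge> e\<close>\<close>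
    have "t n (Suc i) < ?T"
      using incr \<open>t n i \<le> r\<close> \<open>t n i < ?T\<close> by (auto simp: min_def abs_if split: if_splits)
    with incr \<open>t n i < ?T\<close> show "t n (Suc i) < t n i + e"
      by simp
  qed
qed

lemma partition_seq_bracket:
  assumes P: "partition_seq t k" and "r \<ge> 0"
  obtains i where "\<forall>\<^sub>F n in sequentially. i n < k n \<and> t n (i n) \<le> r \<and> r < t n (Suc (i n))"
    and "(\<lambda>n. t n (i n)) \<longlonglongrightarrow> r" and "(\<lambda>n. t n (Suc (i n))) \<longlonglongrightarrow> r"
proof -
  define i where "i n = (SOME i. i < k n \<and> t n i \<le> r \<and> r < t n (Suc i))" for n
  have "\<forall>\<^sub>F n in sequentially. r < t n (k n)"
    using P unfolding partition_seq_def by (simp add: filterlim_at_top_dense)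
  then have bracket: "\<forall>\<^sub>F n in sequentially. i n < k n \<and> t n (i n) \<le> r \<and> r < t n (Suc (i n))"
  proof (rule eventually_mono)
    fix n assume "r < t n (k n)"
    with P \<open>r \<ge> 0\<close> have "\<exists>i<k n. t n i \<le> r \<and> r < t n (Suc i)"
      by (intro exists_bracketing_index) (simp_all add: partition_seq_def)
    then show "i n < k n \<and> t n (i n) \<le> r \<and> r < t n (Suc (i n))"
      unfolding i_def by (rule someI_ex)
  qed
  have near_r: "\<forall>\<^sub>F n in sequentially. r - e < t n (i n) \<and> t n (i n) \<le> r
      \<and> r < t n (Suc (i n)) \<and> t n (Suc (i n)) < r + e" if "e > 0" for e
    using bracket partition_seq_mesh_at[OF P that, of r]
    by eventually_elim auto
  have "(\<lambda>n. t n (i n)) \<longlonglongrightarrow> r"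
    by (rule tendstoI, rule eventually_mono[OF near_r]) (auto simp: dist_real_def)
  moreover have "(\<lambda>n. t n (Suc (i n))) \<longlonglongrightarrow> r"
    by (rule tendstoI, rule eventually_mono[OF near_r]) (auto simp: dist_real_def)
  ultimately show thesis
    using bracket that by blast
qed

lemma cadlag_Bfun_approach_from_left:
  assumes "cadlag x" and "(b \<longlongrightarrow> r) F" and "\<forall>\<^sub>F n in F. 0 \<le> b n \<and> b n \<le> r"
  shows "Bfun (\<lambda>n. x (b n)) F"
proof (cases "r > 0")
  case True
  then obtain l where "(x \<longlongrightarrow> l) (at_left r)"
    using \<open>cadlag x\<close> unfolding cadlag_def by auto
  then have "\<forall>\<^sub>F y in at_left r. dist (x y) l < 1"
    by (rule tendstoD) simp
  then obtain d where "d > 0" and near: "\<And>y. y < r \<Longrightarrow> dist y r < d \<Longrightarrow> dist (x y) l < 1"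
    unfolding eventually_at by auto
  have "\<forall>\<^sub>F n in F. dist (b n) r < d"
    using \<open>(b \<longlongrightarrow> r) F\<close> \<open>d > 0\<close> by (rule tendstoD)
  with assms(3) have "\<forall>\<^sub>F n in F. norm (x (b n)) \<le> max (\<bar>l\<bar> + 1) \<bar>x r\<bar>"
  proof eventually_elim
    case (elim n)
    show ?case
    proof (cases "b n = r")
      case False
      then have "dist (x (b n)) l < 1" using near elim by simp
      then show ?thesis by (simp add: dist_real_def)
    qed simp
  qed
  then show ?thesis by (rule BfunI)
next
  case False
  with assms(3) have "\<forall>\<^sub>F n in F. b n = 0"
    by (elim eventually_mono) linarith
  then have "\<forall>\<^sub>F n in F. norm (x (b n)) \<le> \<bar>x 0\<bar>"
    by (elim eventually_mono) simp
  then show ?thesis by (rule BfunI)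
qed

lemma cadlag_partition_bracket:
  assumes P: "partition_seq t k" and X: "cadlag x" and "r \<ge> 0"
  obtains i where "\<forall>\<^sub>F n in sequentially. i n < k n \<and> t n (i n) \<le> r \<and> r < t n (Suc (i n))"
    and "(\<lambda>n. x (t n (Suc (i n)))) \<longlonglongrightarrow> x r" and "Bfun (\<lambda>n. x (t n (i n))) sequentially"
proof -
  obtain i where bracket: "\<forall>\<^sub>F n in sequentially. i n < k n \<and> t n (i n) \<le> r \<and> r < t n (Suc (i n))"
    and left: "(\<lambda>n. t n (i n)) \<longlonglongrightarrow> r" and right: "(\<lambda>n. t n (Suc (i n))) \<longlonglongrightarrow> r"
    using partition_seq_bracket[OF P \<open>r \<ge> 0\<close>] by blast
  have "\<forall>\<^sub>F n in sequentially. 0 \<le> t n (i n) \<and> t n (i n) \<le> r"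
    using bracket
  proof eventually_elim
    case (elim n)
    have "t n 0 = 0" and "\<forall>j<k n. t n j \<le> t n (Suc j)"
      using P unfolding partition_seq_def by (simp_all add: less_imp_le)
    with elim show ?case
      using lift_Suc_mono_le_upto[of "k n" "t n" 0 "i n"] by simp
  qed
  with left have "Bfun (\<lambda>n. x (t n (i n))) sequentially"
    by (intro cadlag_Bfun_approach_from_left[OF X])
  moreover have "(x \<longlongrightarrow> x r) (at_right r)"
    using X \<open>r \<ge> 0\<close> unfolding cadlag_def continuous_within by simp
  moreover have "filterlim (\<lambda>n. t n (Suc (i n))) (at_right r) sequentially"
    unfolding filterlim_at
  proof
    show "\<forall>\<^sub>F n in sequentially. t n (Suc (i n)) \<in> {r<..} \<and> t n (Suc (i n)) \<noteq> r"
      using bracket by eventually_elim simp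
  qed (fact right)
  ultimately show thesis
    using bracket that filterlim_compose by blast
qed

lemma q_n_minus_s_n_tendsto_zero:
  assumes P: "partition_seq t k" and X: "cadlag x" and "r \<ge> 0"
  shows "(\<lambda>n. q_n t k x n r - s_n t k x n r) \<longlonglongrightarrow> 0"
proof -
  obtain i where bracket: "\<forall>\<^sub>F n in sequentially. i n < k n \<and> t n (i n) \<le> r \<and> r < t n (Suc (i n))"
    and right: "(\<lambda>n. x (t n (Suc (i n)))) \<longlonglongrightarrow> x r" and left: "Bfun (\<lambda>n. x (t n (i n))) sequentially"
    using cadlag_partition_bracket[OF P X \<open>r \<ge> 0\<close>] by blast
  define dx where "dx n = x (t n (Suc (i n))) - x r" for n
  have "dx \<longlonglongrightarrow> 0"
    using tendsto_diff[OF right tendsto_const[of "x r"]] unfolding dx_def by simp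
  moreover have "(\<lambda>n. dx n * x (t n (i n))) \<longlonglongrightarrow> 0"
    using bounded_bilinear.Zfun_prod_Bfun[OF bounded_bilinear_mult] \<open>dx \<longlonglongrightarrow> 0\<close> left
    by (simp add: tendsto_Zfun_iff)
  ultimately have "(\<lambda>n. dx n * (x (t n (Suc (i n))) + x r) - 2 * (dx n * x (t n (i n))))
      \<longlonglongrightarrow> 0 * (x r + x r) - 2 * 0"
    by (intro tendsto_intros right)
  moreover have "\<forall>\<^sub>F n in sequentially. q_n t k x n r - s_n t k x n r
      = dx n * (x (t n (Suc (i n))) + x r) - 2 * (dx n * x (t n (i n)))"
    using bracket
  proof eventually_elim
    case (elim n)
    have "\<forall>j<k n. t n j \<le> t n (Suc j)"
      using P unfolding partition_seq_def by (simp add: less_imp_le)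
    with elim have "q_n t k x n r - s_n t k x n r
        = dx n * (x (t n (Suc (i n))) + x r - 2 * x (t n (i n)))"
      unfolding dx_def by (intro q_n_minus_s_n_bracket) simp_all
    then show ?case
      by (simp add: algebra_simps)
  qed
  ultimately show ?thesis
    by (simp add: tendsto_cong)
qed

theorem proposition2p4:
  fixes t :: "nat \<Rightarrow> nat \<Rightarrow> real" and k :: "nat \<Rightarrow> nat"
    and x s sc :: "real \<Rightarrow> real"
  assumes "partition_seq t k"
    and "cadlag x"
    and "\<forall>r\<ge>0. (\<lambda>n. s_n t k x n r) \<longlonglongrightarrow> s r"
    and "continuous_on {0..} sc" and "mono_on {0..} sc"
    and "\<forall>r\<ge>0. ((\<lambda>u. (jump x u)^2) has_sum (s r - sc r)) {0..r}"
  shows "\<exists>q. (\<forall>r\<ge>0. (\<lambda>n. q_n t k x n r) \<longlonglongrightarrow> q r)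
           \<and> (\<forall>r\<ge>0. q r = s r)
           \<and> (\<exists>qc. continuous_on {0..} qc \<and> mono_on {0..} qc
                  \<and> (\<forall>r\<ge>0. ((\<lambda>u. (jump x u)^2) has_sum (q r - qc r)) {0..r}))"
proof -
  have "(\<lambda>n. q_n t k x n r) \<longlonglongrightarrow> s r" if "r \<ge> 0" for r
    using tendsto_add[OF q_n_minus_s_n_tendsto_zero[OF assms(1,2) that] assms(3)[rule_format, OF that]]
    by simp
  with assms(4-6) show ?thesis
    by blast
qed

end
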